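(* Let $n\ge 2$ and consider Tower of Hanoi on three pegs with $n$ disks, starting from the initial position (all $n$ disks on Peg 1). For every intermediate position $P$ (i.e. a position in which the disks are not all on a single peg), there is a finite sequence of legal moves of even length, in which no two consecutive moves move the same disk, that transforms the initial position into $P$.
   Context: Tower of Hanoi on three pegs (labeled 1, 2, 3) with $n$ disks of pairwise distinct sizes: a position is an assignment of each disk to a peg, the disks on each peg being stacked with sizes decreasing from bottom to top. A legal move transfers the top disk of one peg to a different peg that is empty or whose top disk is larger. Here, sequences of legal moves are considered without any restriction on intermediate positions (in particular, intermediate positions may have all disks on one peg), except that no disk may be moved in two consecutive moves. *)

theory Defs
  imports Main
begin

(* Disks are 0..<n; disk i has size i (so disk 0 is the smallest).
   A position is a list p of length n with p ! i in {1,2,3} the peg of disk i.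
   The stacking order on each peg is forced by the sizes, so this encodes a position. *)

definition valid_pos :: "nat \<Rightarrow> nat list \<Rightarrow> bool" where
  "valid_pos n p \<longleftrightarrow> length p = n \<and> set p \<subseteq> {1,2,3}"

definition legal_move :: "nat \<Rightarrow> nat list \<Rightarrow> nat \<Rightarrow> nat list \<Rightarrow> bool" where
  "legal_move n p d q \<longleftrightarrow> valid_pos n p \<and> d < n \<and>
     (\<exists>b\<in>{1,2,3}. b \<noteq> p ! d \<and> q = p[d := b] \<and>
        (\<forall>j<d. p ! j \<noteq> p ! d \<and> p ! j \<noteq> b))"

definition move_seq :: "nat \<Rightarrow> nat list list \<Rightarrow> nat list \<Rightarrow> bool" where
  "move_seq n ps ds \<longleftrightarrow> length ps = length ds + 1 \<and>
     (\<forall>i<length ds. legal_move n (ps ! i) (ds ! i) (ps ! Suc i)) \<and>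
     (\<forall>i. Suc i < length ds \<longrightarrow> ds ! i \<noteq> ds ! Suc i)"

definition initial_pos :: "nat \<Rightarrow> nat list" where
  "initial_pos n = replicate n 1"

definition intermediate :: "nat \<Rightarrow> nat list \<Rightarrow> bool" where
  "intermediate n p \<longleftrightarrow> valid_pos n p \<and> \<not> (\<exists>a. \<forall>i<n. p ! i = a)"

end

theory Submission
  imports Defs
begin

text \<open>Disks are indexed by size, so a position of \<open>n + 1\<close> disks is a position of the \<open>n\<close>
smaller disks followed by the peg of the largest one, and walks of the smaller disks lift
verbatim. By induction on \<open>n\<close>, every intermediate position is reached from every tower with
either parity. If the smaller disks end in an intermediate position, the largest disk moves
at most once, after the smaller tower has been transferred to the third peg, and the parity
is inherited from the smaller problem. If they end in a tower on peg \<open>d\<close> while the largest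
disk ends on \<open>x \<noteq> d\<close>, the largest disk is sent around the pegs: transferring a tower always
takes an odd number of moves, so a transfer followed by a move of the largest disk has even
length, and reaching the target right after a move of the largest disk or right after a
transfer of the smaller tower gives the two parities.\<close>

inductive walk :: "nat \<Rightarrow> nat list \<Rightarrow> nat list \<Rightarrow> nat list \<Rightarrow> bool" where
  walk_Nil: "valid_pos n p \<Longrightarrow> walk n p [] p"
| walk_Cons: "legal_move n p d p' \<Longrightarrow> walk n p' ds q \<Longrightarrow> (ds = [] \<or> hd ds \<noteq> d) \<Longrightarrow>
    walk n p (d # ds) q"

lemma legal_move_valid_pos: "legal_move n p d q \<Longrightarrow> valid_pos n q"
  unfolding legal_move_def valid_pos_def
  by (auto dest: set_update_subset_insert[THEN subsetD])

lemma walk_valid_pos: "walk n p ds q \<Longrightarrow> valid_pos n p \<and> valid_pos n q"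
  by (induction rule: walk.induct) (auto simp: legal_move_def)

lemma walk_disks_less: "walk n p ds q \<Longrightarrow> d \<in> set ds \<Longrightarrow> d < n"
  by (induction rule: walk.induct) (auto simp: legal_move_def)

lemma walk_hd_less: "walk n p ds q \<Longrightarrow> ds = [] \<or> hd ds < n"
  using walk_disks_less hd_in_set by blast

lemma walk_last_less: "walk n p ds q \<Longrightarrow> ds = [] \<or> last ds < n"
  using walk_disks_less last_in_set by blast

lemma walk_single: "legal_move n p d q \<Longrightarrow> walk n p [d] q"
  by (rule walk_Cons[OF _ walk_Nil]) (auto intro: legal_move_valid_pos)

lemma walk_append:
  "walk n p ds q \<Longrightarrow> walk n q es r \<Longrightarrow> (ds = [] \<or> es = [] \<or> last ds \<noteq> hd es) \<Longrightarrow>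
    walk n p (ds @ es) r"
proof (induction rule: walk.induct)
  case (walk_Nil n p)
  then show ?case by simp
next
  case (walk_Cons n p d p' ds q)
  have "walk n p' (ds @ es) r"
    using walk_Cons by (cases "ds = []") auto
  moreover have "ds @ es = [] \<or> hd (ds @ es) \<noteq> d"
    using walk_Cons.hyps(3) walk_Cons.prems(2) by (cases ds) auto
  ultimately show ?case
    using walk_Cons.hyps(1) by (auto intro: walk.walk_Cons)
qed

lemma walk_snoc_fixed_disk:
  "walk n p ds q \<Longrightarrow> x \<in> {1,2,3} \<Longrightarrow> walk (Suc n) (p @ [x]) ds (q @ [x])"
proof (induction rule: walk.induct)
  case (walk_Nil n p)
  then show ?case by (auto intro!: walk.walk_Nil simp: valid_pos_def)
next
  case (walk_Cons n p d p' ds q)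
  have "legal_move (Suc n) (p @ [x]) d (p' @ [x])"
    using walk_Cons.hyps(1) walk_Cons.prems unfolding legal_move_def valid_pos_def
    by (auto simp: nth_append list_update_append1)
  then show ?case
    using walk_Cons by (auto intro: walk.walk_Cons)
qed

lemma walk_imp_move_seq: "walk n p ds q \<Longrightarrow> \<exists>ps. move_seq n ps ds \<and> hd ps = p \<and> last ps = q"
proof (induction rule: walk.induct)
  case (walk_Nil n p)
  then show ?case by (auto intro!: exI[of _ "[p]"] simp: move_seq_def)
next
  case (walk_Cons n p d p' ds q)
  then obtain ps where ps: "move_seq n ps ds" "hd ps = p'" "last ps = q"
    by blast
  then have "ps \<noteq> []"
    by (auto simp: move_seq_def)
  with ps(2) have "ps ! 0 = p'"
    by (simp add: hd_conv_nth)
  have "move_seq n (p # ps) (d # ds)"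
    unfolding move_seq_def
  proof (intro conjI allI impI)
    show "length (p # ps) = length (d # ds) + 1"
      using ps(1) by (simp add: move_seq_def)
  next
    fix i assume "i < length (d # ds)"
    then show "legal_move n ((p # ps) ! i) ((d # ds) ! i) ((p # ps) ! Suc i)"
      using ps(1) \<open>ps ! 0 = p'\<close> walk_Cons.hyps(1) by (cases i) (auto simp: move_seq_def)
  next
    fix i assume "Suc i < length (d # ds)"
    then show "(d # ds) ! i \<noteq> (d # ds) ! Suc i"
      using ps(1) walk_Cons.hyps(3) by (cases i) (auto simp: move_seq_def hd_conv_nth)
  qed
  then show ?case
    using ps \<open>ps \<noteq> []\<close> by (auto intro!: exI[of _ "p # ps"])
qed

lemma third_peg: "a \<in> {1,2,3::nat} \<Longrightarrow> b \<in> {1,2,3} \<Longrightarrow> \<exists>c\<in>{1,2,3}. c \<noteq> a \<and> c \<noteq> b"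
  by (cases "a = 1 \<or> b = 1"; cases "a = 2 \<or> b = 2") auto

lemma intermediate_imp_two_le: "intermediate n P \<Longrightarrow> 2 \<le> n"
proof (rule ccontr)
  assume "intermediate n P" "\<not> 2 \<le> n"
  have "\<forall>i<n. P ! i = P ! 0"
  proof (intro allI impI)
    fix i assume "i < n"
    with \<open>\<not> 2 \<le> n\<close> have "i = 0" by linarith
    then show "P ! i = P ! 0" by simp
  qed
  with \<open>intermediate n P\<close> show False
    unfolding intermediate_def by blast
qed

lemma not_intermediate_replicate: "\<not> intermediate n (replicate n d)"
  by (auto simp: intermediate_def)

lemma not_intermediate_imp_replicate:
  assumes "valid_pos n P" "\<not> intermediate n P"
  shows "\<exists>d\<in>{1,2,3}. P = replicate n d"
proof (cases "n = 0")
  case True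
  then show ?thesis using assms(1) by (auto simp: valid_pos_def)
next
  case False
  obtain a where a: "\<forall>i<n. P ! i = a" and "length P = n" "set P \<subseteq> {1,2,3}"
    using assms by (auto simp: intermediate_def valid_pos_def)
  then have "P = replicate n a" "a \<in> set P"
    using False by (auto intro: nth_equalityI simp: in_set_conv_nth)
  then show ?thesis using \<open>set P \<subseteq> {1,2,3}\<close> by blast
qed

lemma legal_move_largest_disk:
  assumes "u \<in> {1,2,3}" "v \<in> {1,2,3}" "w \<in> {1,2,3}" "u \<noteq> v" "w \<noteq> u" "w \<noteq> v"
  shows "legal_move (Suc m) (replicate m w @ [u]) m (replicate m w @ [v])"
  using assms list_update_length[of "replicate m w" u "[]" v]
  by (auto simp: legal_move_def valid_pos_def nth_append)

lemma walk_snoc_largest_move: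
  assumes "walk (Suc m) p ds (replicate m w @ [u])" "ds = [] \<or> last ds < m"
    and "v \<in> {1,2,3}" "u \<noteq> v" "w \<noteq> u" "w \<noteq> v" "w \<in> {1,2,3}"
  shows "walk (Suc m) p (ds @ [m]) (replicate m w @ [v])"
proof -
  have "u \<in> {1,2,3}"
    using walk_valid_pos[OF assms(1)] by (auto simp: valid_pos_def)
  then have "walk (Suc m) (replicate m w @ [u]) [m] (replicate m w @ [v])"
    using assms by (intro walk_single legal_move_largest_disk) auto
  with assms(1,2) show ?thesis
    by (auto intro: walk_append)
qed

lemma walk_append_lifted:
  assumes "walk (Suc m) p ds (q @ [x])" "ds = [] \<or> last ds = m" "walk m q es r"
  shows "walk (Suc m) p (ds @ es) (r @ [x])"
proof -
  have "x \<in> {1,2,3}"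
    using walk_valid_pos[OF assms(1)] by (auto simp: valid_pos_def)
  then have "walk (Suc m) (q @ [x]) es (r @ [x])"
    by (rule walk_snoc_fixed_disk[OF assms(3)])
  moreover have "es = [] \<or> hd es < m"
    using assms(3) by (rule walk_hd_less)
  ultimately show ?thesis
    using assms(1,2) by (auto intro: walk_append)
qed

lemma walk_tower_transfer:
  assumes "1 \<le> n" "a \<in> {1,2,3}" "b \<in> {1,2,3}" "a \<noteq> b"
  shows "\<exists>ds. walk n (replicate n a) ds (replicate n b) \<and> odd (length ds)"
  using assms
proof (induction n arbitrary: a b)
  case 0
  then show ?case by simp
next
  case (Suc m)
  show ?case
  proof (cases "m = 0")
    case True
    then have "walk 1 [a] [0] [b]"
      using Suc.prems by (intro walk_single) (auto simp: legal_move_def valid_pos_def)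
    then show ?thesis
      using True by auto
  next
    case False
    obtain c where c: "c \<in> {1,2,3}" "c \<noteq> a" "c \<noteq> b"
      using third_peg Suc.prems by blast
    obtain ds where ds: "walk m (replicate m a) ds (replicate m c)" "odd (length ds)"
      using Suc.IH[of a c] False c Suc.prems by auto
    obtain es where es: "walk m (replicate m c) es (replicate m b)" "odd (length es)"
      using Suc.IH[of c b] False c Suc.prems by auto
    have "walk (Suc m) (replicate m a @ [a]) ds (replicate m c @ [a])"
      using Suc.prems by (intro walk_snoc_fixed_disk[OF ds(1)])
    then have "walk (Suc m) (replicate m a @ [a]) (ds @ [m]) (replicate m c @ [b])"
      using walk_last_less[OF ds(1)] c Suc.prems
      by (intro walk_snoc_largest_move) auto
    then have "walk (Suc m) (replicate m a @ [a]) (ds @ [m] @ es) (replicate m b @ [b])"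
      using walk_append_lifted[OF _ _ es(1)] by fastforce
    then show ?thesis
      using ds(2) es(2) by (intro exI[of _ "ds @ [m] @ es"]) (simp add: replicate_append_same)
  qed
qed

lemma walk_append_lifted_tower_transfer:
  assumes "walk (Suc m) p ds (replicate m w @ [v])" "ds = [] \<or> last ds = m"
    and "1 \<le> m" "w' \<in> {1,2,3}" "w' \<noteq> w"
  shows "\<exists>es. walk (Suc m) p (ds @ es) (replicate m w' @ [v]) \<and> odd (length es) \<and> last es < m"
proof -
  have "w \<in> {1,2,3}"
    using walk_valid_pos[OF assms(1)] assms(3) by (auto simp: valid_pos_def)
  then obtain es where es: "walk m (replicate m w) es (replicate m w')" "odd (length es)"
    using walk_tower_transfer assms(3-5) by metis
  then have "es \<noteq> []"
    by auto
  then show ?thesis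
    using walk_append_lifted[OF assms(1,2) es(1)] walk_last_less[OF es(1)] es(2) by blast
qed

lemma walk_rotate_largest:
  assumes "walk (Suc m) p (ds @ [m]) (replicate m w @ [v])" "1 \<le> m"
    and "u \<in> {1,2,3}" "u \<noteq> v" "u \<noteq> w" "w \<noteq> v"
  shows "\<exists>es. walk (Suc m) p (ds @ [m] @ es @ [m]) (replicate m u @ [w]) \<and> odd (length es)"
proof -
  have "w \<in> {1,2,3}"
    using walk_valid_pos[OF assms(1)] assms(2) by (auto simp: valid_pos_def)
  obtain es where es: "walk (Suc m) p (ds @ [m] @ es) (replicate m u @ [v])"
      "odd (length es)" "last es < m"
    using walk_append_lifted_tower_transfer[OF assms(1) _ assms(2,3)] assms(5) by auto
  then have "walk (Suc m) p ((ds @ [m] @ es) @ [m]) (replicate m u @ [w])"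
    using \<open>w \<in> {1,2,3}\<close> assms(3-6) by (intro walk_snoc_largest_move) auto
  with es(2) show ?thesis
    by auto
qed

lemma walk_from_tower_moving_largest_once:
  assumes "1 \<le> m" "a \<in> {1,2,3}" "w \<in> {1,2,3}" "v \<in> {1,2,3}" "w \<noteq> v" "w \<noteq> a" "v \<noteq> a"
  shows "\<exists>ds. walk (Suc m) (replicate m a @ [a]) (ds @ [m]) (replicate m w @ [v]) \<and> odd (length ds)"
proof -
  have "walk (Suc m) (replicate m a @ [a]) [] (replicate m a @ [a])"
    using assms(2) by (intro walk_Nil) (auto simp: valid_pos_def)
  then obtain ds where ds: "walk (Suc m) (replicate m a @ [a]) ds (replicate m w @ [a])"
      "odd (length ds)" "last ds < m"
    using walk_append_lifted_tower_transfer[of m _ "[]" a a w] assms(1,3,6) by auto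
  then have "walk (Suc m) (replicate m a @ [a]) (ds @ [m]) (replicate m w @ [v])"
    using assms by (intro walk_snoc_largest_move[OF ds(1)]) auto
  with ds(2) show ?thesis
    by blast
qed

lemma walk_from_tower_ending_with_largest:
  assumes "1 \<le> m" "a \<in> {1,2,3}" "w \<in> {1,2,3}" "v \<in> {1,2,3}" "w \<noteq> v"
  shows "\<exists>ds. walk (Suc m) (replicate (Suc m) a) (ds @ [m]) (replicate m w @ [v]) \<and> odd (length ds)"
proof -
  define reach where "reach w v \<longleftrightarrow> (\<exists>ds. walk (Suc m) (replicate m a @ [a]) (ds @ [m])
      (replicate m w @ [v]) \<and> odd (length ds))" for w v
  have start: "reach w v"
    if "w \<in> {1,2,3}" "v \<in> {1,2,3}" "w \<noteq> v" "w \<noteq> a" "v \<noteq> a" for w v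
    using walk_from_tower_moving_largest_once[OF assms(1,2) that] unfolding reach_def .
  have rotate: "reach u w"
    if uvw: "reach w v" "u \<in> {1,2,3}" "u \<noteq> v" "u \<noteq> w" "w \<noteq> v" for u v w
  proof -
    obtain ds where ds: "walk (Suc m) (replicate m a @ [a]) (ds @ [m]) (replicate m w @ [v])"
        "odd (length ds)"
      using uvw(1) unfolding reach_def by blast
    then obtain es where "walk (Suc m) (replicate m a @ [a]) (ds @ [m] @ es @ [m])
        (replicate m u @ [w])" "odd (length es)"
      using walk_rotate_largest[OF ds(1) assms(1) uvw(2-5)] by blast
    with ds(2) show ?thesis
      unfolding reach_def by (intro exI[of _ "ds @ [m] @ es"]) auto
  qed
  have "reach w v"
  proof -
    \<comment> \<open>Every pair of distinct pegs is at most two rotations away from a pair avoiding \<open>a\<close>.\<close>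
    consider "w \<noteq> a" "v \<noteq> a" | "w = a" | "v = a"
      by blast
    then show ?thesis
    proof cases
      case 1
      then show ?thesis using start[of w v] assms by simp
    next
      case 2
      obtain s where s: "s \<in> {1,2,3}" "s \<noteq> a" "s \<noteq> v"
        using third_peg assms by blast
      then have "reach v s"
        using start[of v s] assms 2 by simp
      then show ?thesis
        using rotate[of v s a] assms 2 s by simp
    next
      case 3
      obtain s where s: "s \<in> {1,2,3}" "s \<noteq> w" "s \<noteq> a"
        using third_peg assms by blast
      then have "reach s w"
        using start[of s w] assms 3 by simp
      then have "reach a s"
        using rotate[of s w a] assms 3 s by simp
      then show ?thesis
        using rotate[of a s w] assms 3 s by simp
    qed
  qed
  then show ?thesis
    unfolding reach_def by (simp add: replicate_append_same)
qed

lemma walk_from_tower_to_tower_with_parity: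
  assumes "1 \<le> m" "a \<in> {1,2,3}" "d \<in> {1,2,3}" "x \<in> {1,2,3}" "d \<noteq> x"
  shows "\<exists>ds. walk (Suc m) (replicate (Suc m) a) ds (replicate m d @ [x]) \<and> (even (length ds) \<longleftrightarrow> e)"
proof (cases e)
  case True
  then show ?thesis
    using walk_from_tower_ending_with_largest[OF assms] by fastforce
next
  case False
  obtain u where u: "u \<in> {1,2,3}" "u \<noteq> d" "u \<noteq> x"
    using third_peg assms by blast
  then obtain ds where ds: "walk (Suc m) (replicate (Suc m) a) (ds @ [m]) (replicate m u @ [x])"
      "odd (length ds)"
    using walk_from_tower_ending_with_largest assms by blast
  then obtain es where "walk (Suc m) (replicate (Suc m) a) ((ds @ [m]) @ es) (replicate m d @ [x])"
      "odd (length es)"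
    using walk_append_lifted_tower_transfer[OF ds(1) _ assms(1,3)] u(2) by auto
  with ds(2) False show ?thesis
    by (intro exI[of _ "ds @ [m] @ es"]) auto
qed

lemma walk_from_tower_to_intermediate:
  assumes "a \<in> {1,2,3}" "intermediate n P"
  shows "\<exists>ds. walk n (replicate n a) ds P \<and> (even (length ds) \<longleftrightarrow> e)"
  using assms
proof (induction n arbitrary: a P e)
  case 0
  then show ?case
    using intermediate_imp_two_le by fastforce
next
  case (Suc m)
  have tower: "replicate (Suc m) a = replicate m a @ [a]"
    by (simp add: replicate_append_same)
  have "valid_pos (Suc m) P"
    using Suc.prems(2) by (simp add: intermediate_def)
  then obtain P' x where P: "P = P' @ [x]" and "valid_pos m P'" "x \<in> {1,2,3}"
    by (cases P rule: rev_cases) (auto simp: valid_pos_def)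
  show ?case
  proof (cases "intermediate m P'")
    case True
    show ?thesis
    proof (cases "x = a")
      case True
      obtain ds where "walk m (replicate m a) ds P'" "even (length ds) \<longleftrightarrow> e"
        using Suc.IH Suc.prems(1) \<open>intermediate m P'\<close> by blast
      then show ?thesis
        using walk_snoc_fixed_disk Suc.prems(1) P tower True by metis
    next
      case False
      obtain c where c: "c \<in> {1,2,3}" "c \<noteq> a" "c \<noteq> x"
        using third_peg Suc.prems(1) \<open>x \<in> {1,2,3}\<close> by blast
      have "1 \<le> m"
        using intermediate_imp_two_le[OF True] by simp
      then obtain ds where ds: "walk (Suc m) (replicate m a @ [a]) (ds @ [m]) (replicate m c @ [x])"
          "odd (length ds)"
        using walk_from_tower_moving_largest_once Suc.prems(1) c \<open>x \<in> {1,2,3}\<close> False by metis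
      moreover obtain es where es: "walk m (replicate m c) es P'" "even (length es) \<longleftrightarrow> e"
        using Suc.IH c(1) True by blast
      ultimately have "walk (Suc m) (replicate m a @ [a]) (ds @ [m] @ es) P"
        using walk_append_lifted P by fastforce
      with ds(2) es(2) show ?thesis
        unfolding tower by (intro exI[of _ "ds @ [m] @ es"]) auto
    qed
  next
    case False
    then obtain d where d: "d \<in> {1,2,3}" "P' = replicate m d"
      using not_intermediate_imp_replicate \<open>valid_pos m P'\<close> by blast
    have "d \<noteq> x"
      using not_intermediate_replicate[of "Suc m" x] Suc.prems(2) P d(2)
      by (auto simp: replicate_append_same)
    moreover have "1 \<le> m"
      using intermediate_imp_two_le[OF Suc.prems(2)] by simp
    ultimately show ?thesis
      using walk_from_tower_to_tower_with_parity Suc.prems(1) d \<open>x \<in> {1,2,3}\<close> P by blast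
  qed
qed

theorem corollary1:
  fixes n :: nat and P :: "nat list"
  assumes "n \<ge> 2" and "intermediate n P"
  shows "\<exists>ps ds. move_seq n ps ds \<and> even (length ds) \<and>
           hd ps = initial_pos n \<and> last ps = P"
proof -
  obtain ds where "walk n (replicate n 1) ds P" "even (length ds)"
    using walk_from_tower_to_intermediate[OF _ assms(2), of 1 True] by auto
  then show ?thesis
    using walk_imp_move_seq unfolding initial_pos_def by blast
qed

end
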